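(* Let $\beta>0$, $\mu\in(0,1/4]$, let $d,\ell\in\mathbb{N}$, let $W$ be a real $2d\times\ell$ matrix and let $\tau\sim\mathcal{Q}(2d,\mu)$. Then for all $t\ge0$, \[\gamma_\ell(S_W(t))\,e^{-32\mu t}\le\mathbb{P}_\tau\big(\|W^T\tau\|_2\le\beta\sqrt{\ell}\big)+\exp(-\beta^2\ell).\]
   Context: For $\mu\in(0,1)$ and $m\in\mathbb{N}$, $\tau\sim\mathcal{Q}(m,\mu)$ denotes a random vector in $\{-1,0,1\}^m$ with independent entries satisfying $\mathbb{P}(\tau_i=1)=\mathbb{P}(\tau_i=-1)=\mu/2$ and $\mathbb{P}(\tau_i=0)=1-\mu$. $\gamma_\ell$ denotes the Gaussian measure on $\mathbb{R}^\ell$ with $\gamma_\ell(S)=\mathbb{P}(g\in S)$ where $g\sim\mathcal{N}(0,(2\pi)^{-1}I_\ell)$. For $u\in\mathbb{R}^m$, $\|u\|_{\mathbb{T}}$ denotes the Euclidean distance from $u$ to $\mathbb{Z}^m$. For a $2d\times\ell$ matrix $W$ and $t\ge0$, $S_W(t):=\{\theta\in\mathbb{R}^\ell:\|W\theta\|_{\mathbb{T}}\le\sqrt t\}$. *)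

theory Defs
  imports "HOL-Probability.Probability"
begin

text \<open>Vectors in R^m are functions nat => real, only indices < m matter.
  Matrices are functions nat => nat => real (row, column).\<close>

text \<open>Single-coordinate law of Q(m,mu): P(1)=P(-1)=mu/2, P(0)=1-mu.\<close>
definition Q_coord :: "real \<Rightarrow> real pmf" where
  "Q_coord \<mu> = do { b \<leftarrow> bernoulli_pmf \<mu>; s \<leftarrow> bernoulli_pmf (1/2);
                     return_pmf (if b then (if s then 1 else -1) else 0) }"

definition Q_dist :: "nat \<Rightarrow> real \<Rightarrow> (nat \<Rightarrow> real) pmf" where
  "Q_dist m \<mu> = Pi_pmf {..<m} 0 (\<lambda>_. Q_coord \<mu>)"

text \<open>Gaussian measure gamma_l: law of g ~ N(0, (2 pi)^(-1) I_l), i.e. l iid centred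
  normals of variance 1/(2 pi) (standard deviation 1/sqrt(2 pi)).\<close>
definition gauss_measure :: "nat \<Rightarrow> (nat \<Rightarrow> real) measure" where
  "gauss_measure l = PiM {..<l} (\<lambda>_. density lborel (normal_density 0 (1 / sqrt (2 * pi))))"

definition torus_norm :: "nat \<Rightarrow> (nat \<Rightarrow> real) \<Rightarrow> real" where
  "torus_norm m u = Inf {sqrt (\<Sum>i<m. (u i - real_of_int (z i))\<^sup>2) | z :: nat \<Rightarrow> int. True}"

definition mat_vec :: "nat \<Rightarrow> nat \<Rightarrow> (nat \<Rightarrow> nat \<Rightarrow> real) \<Rightarrow> (nat \<Rightarrow> real) \<Rightarrow> (nat \<Rightarrow> real)" where
  "mat_vec m n A x = (\<lambda>i. \<Sum>j<n. A i j * x j)"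

definition transp_mat :: "(nat \<Rightarrow> nat \<Rightarrow> real) \<Rightarrow> (nat \<Rightarrow> nat \<Rightarrow> real)" where
  "transp_mat A = (\<lambda>i j. A j i)"

definition euclid_norm :: "nat \<Rightarrow> (nat \<Rightarrow> real) \<Rightarrow> real" where
  "euclid_norm n x = sqrt (\<Sum>i<n. (x i)\<^sup>2)"

definition S_set :: "nat \<Rightarrow> nat \<Rightarrow> (nat \<Rightarrow> nat \<Rightarrow> real) \<Rightarrow> real \<Rightarrow> (nat \<Rightarrow> real) set" where
  "S_set d l W t = {\<theta> \<in> space (gauss_measure l). torus_norm (2*d) (mat_vec (2*d) l W \<theta>) \<le> sqrt t}"

end

theory Submission
  imports Defs
begin

(*
  Write phi_mu(x) = 1 - mu + mu cos(2 pi x) (Q_char mu x below).  It is the characteristic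
  function of a coordinate of Q(2d, mu) at 2 pi x, and exp(-pi |v|^2) is the characteristic
  function of gamma_l at 2 pi v.  Integrating prod_i phi_mu((W theta)_i) against gamma_l and
  exchanging the order of integration (tau has finite support) therefore gives
  E_tau exp(-pi |W^T tau|^2), which is at most P(|W^T tau| <= beta sqrt l) + exp(-beta^2 l).
  On the other hand phi_mu is 1-periodic and phi_mu(x) >= exp(-32 mu x^2) for mu <= 1/4, so
  the integrand is at least exp(-32 mu t) on S_W(t).
*)

definition Q_char :: "real \<Rightarrow> real \<Rightarrow> real" where
  "Q_char \<mu> x = 1 - \<mu> + \<mu> * cos (2 * pi * x)"

lemma Q_char_eq: "Q_char \<mu> x = 1 - 2 * \<mu> * (sin (pi * x))\<^sup>2"
proof -
  have "cos (2 * pi * x) = 1 - 2 * (sin (pi * x))\<^sup>2"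
    using cos_double_sin[of "pi * x"] by (simp add: mult.assoc)
  then show ?thesis
    by (simp add: Q_char_def right_diff_distrib)
qed

lemma Q_char_diff_of_int: "Q_char \<mu> (x - of_int k) = Q_char \<mu> x"
  by (simp add: Q_char_def right_diff_distrib cos_diff)

lemma Q_char_pos: "0 \<le> \<mu> \<Longrightarrow> \<mu> < 1/2 \<Longrightarrow> 0 < Q_char \<mu> x"
  using mult_left_mono[of "-1" "cos (2 * pi * x)" \<mu>] by (simp add: Q_char_def)

lemma exp_neg_two_ln2_le_one_minus:
  fixes a :: real
  assumes "0 \<le> a" "a \<le> 1/2"
  shows "exp (- 2 * ln 2 * a) \<le> 1 - a"
proof -
  have "exp ((2 * a) * (- ln 2) + (1 - 2 * a) * 0) \<le> (2 * a) * exp (- ln 2) + (1 - 2 * a) * exp 0"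
    using convex_onD[OF exp_convex, of "2 * a" 0 "- ln 2"] assms by (simp add: algebra_simps)
  then show ?thesis by (simp add: exp_minus mult_ac)
qed

lemma Q_char_ge_exp:
  assumes "0 \<le> \<mu>" "\<mu> \<le> 1/4"
  shows "exp (- 32 * \<mu> * x\<^sup>2) \<le> Q_char \<mu> x"
proof -
  \<comment> \<open>Where 32 comes from: 1 - a \<ge> 4 powr (-a) on [0, 1/2], and 4 ln 2 pi^2 < 28.\<close>
  define a where "a = 2 * \<mu> * (sin (pi * x))\<^sup>2"
  have "(sin (pi * x))\<^sup>2 \<le> 1"
    by (simp add: abs_square_le_1)
  with assms have a: "0 \<le> a" "a \<le> 1/2"
    unfolding a_def using mult_left_mono[of "(sin (pi * x))\<^sup>2" 1 \<mu>] by auto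
  have sin_sq: "(sin (pi * x))\<^sup>2 \<le> pi\<^sup>2 * x\<^sup>2"
    using abs_sin_x_le_abs_x[of "pi * x"] by (metis abs_ge_zero power2_abs power_mono power_mult_distrib)
  have pi_sq: "pi\<^sup>2 \<le> (16 / 5 :: real)\<^sup>2"
    using pi_approx by (intro power_mono) auto
  have "2 * ln 2 * a \<le> 2 * (25/36) * a"
    using ln2_le_25_over_36 a by (intro mult_right_mono) auto
  also have "\<dots> \<le> (25/9) * \<mu> * (pi\<^sup>2 * x\<^sup>2)"
    unfolding a_def using mult_left_mono[OF sin_sq, of \<mu>] assms by simp
  also have "\<dots> \<le> (25/9) * \<mu> * ((16/5)\<^sup>2 * x\<^sup>2)"
    using pi_sq assms by (intro mult_left_mono mult_right_mono) auto
  also have "\<dots> \<le> 32 * \<mu> * x\<^sup>2"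
    using assms by (simp add: power2_eq_square)
  finally have "exp (- 32 * \<mu> * x\<^sup>2) \<le> exp (- 2 * ln 2 * a)"
    by simp
  also have "\<dots> \<le> 1 - a"
    using a by (rule exp_neg_two_ln2_le_one_minus)
  finally show ?thesis
    by (simp add: Q_char_eq a_def)
qed

lemma prod_Q_char_ge_exp_dist:
  fixes m :: nat
  assumes "0 \<le> \<mu>" "\<mu> \<le> 1/4"
  shows "exp (- 32 * \<mu> * (\<Sum>i<m. (u i - of_int (z i))\<^sup>2)) \<le> (\<Prod>i<m. Q_char \<mu> (u i))"
proof -
  have "exp (- 32 * \<mu> * (\<Sum>i<m. (u i - of_int (z i))\<^sup>2))
      = (\<Prod>i<m. exp (- 32 * \<mu> * (u i - of_int (z i))\<^sup>2))"
    unfolding sum_distrib_left by (subst exp_sum) auto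
  also have "\<dots> \<le> (\<Prod>i<m. Q_char \<mu> (u i - of_int (z i)))"
    using assms by (intro prod_mono conjI Q_char_ge_exp) auto
  finally show ?thesis
    by (simp add: Q_char_diff_of_int)
qed

lemma le_torus_norm:
  assumes "\<And>z. r \<le> sqrt (\<Sum>i<m. (u i - of_int (z i))\<^sup>2)"
  shows "r \<le> torus_norm m u"
  unfolding torus_norm_def using assms by (intro cInf_greatest) auto

lemma torus_norm_nonneg: "0 \<le> torus_norm m u"
  by (rule le_torus_norm) (simp add: sum_nonneg)

lemma prod_Q_char_ge_exp_torus_norm:
  fixes m :: nat
  assumes "0 < \<mu>" "\<mu> \<le> 1/4"
  shows "exp (- 32 * \<mu> * (torus_norm m u)\<^sup>2) \<le> (\<Prod>i<m. Q_char \<mu> (u i))"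
proof -
  define P where "P = (\<Prod>i<m. Q_char \<mu> (u i))"
  have "0 < P"
    unfolding P_def using assms by (intro prod_pos Q_char_pos) auto
  \<comment> \<open>Every lattice distance is at least sqrt c, hence so is their infimum.\<close>
  define c where "c = - ln P / (32 * \<mu>)"
  have P_eq: "P = exp (- 32 * \<mu> * c)"
    using \<open>0 < P\<close> assms by (simp add: c_def)
  have "c \<le> (torus_norm m u)\<^sup>2"
  proof (cases "c \<le> 0")
    case False
    have "sqrt c \<le> sqrt (\<Sum>i<m. (u i - of_int (z i))\<^sup>2)" for z
      using prod_Q_char_ge_exp_dist[of \<mu> u z m] assms by (simp add: P_eq flip: P_def)
    then have "sqrt c \<le> torus_norm m u"
      by (rule le_torus_norm)
    then have "(sqrt c)\<^sup>2 \<le> (torus_norm m u)\<^sup>2"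
      using False by (intro power_mono) simp_all
    with False show ?thesis
      by simp
  qed (use order_trans zero_le_power2 in blast)
  then show ?thesis
    using assms by (simp add: P_eq flip: P_def)
qed

lemma Q_coord_eq_map_pmf:
  "Q_coord \<mu> = map_pmf (\<lambda>(b, s). if b then if s then 1 else -1 else 0)
     (pair_pmf (bernoulli_pmf \<mu>) (bernoulli_pmf (1/2)))"
  unfolding Q_coord_def pair_pmf_def map_bind_pmf map_return_pmf by simp

lemma finite_set_pmf_Q_coord: "finite (set_pmf (Q_coord \<mu>))"
  unfolding Q_coord_eq_map_pmf by simp

lemma finite_set_pmf_Q_dist: "finite (set_pmf (Q_dist m \<mu>))"
  unfolding Q_dist_def
  by (intro finite_subset[OF set_Pi_pmf_subset'] finite_PiE_dflt) (auto simp: finite_set_pmf_Q_coord)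

lemma integral_iexp_Q_coord:
  assumes "0 \<le> \<mu>" "\<mu> \<le> 1"
  shows "(\<integral>y. iexp (2 * pi * x * y) \<partial>Q_coord \<mu>) = of_real (Q_char \<mu> x)"
proof -
  have "(\<integral>y. iexp (2 * pi * x * y) \<partial>Q_coord \<mu>)
      = of_real \<mu> * ((iexp (2 * pi * x) + iexp (- (2 * pi * x))) / 2) + of_real (1 - \<mu>)"
    unfolding Q_coord_eq_map_pmf integral_map_pmf
    using assms
    by (subst integral_measure_pmf[of "{(True, True), (True, False), (False, True), (False, False)}"])
       (auto simp: pmf_pair scaleR_conv_of_real algebra_simps)
  also have "iexp (2 * pi * x) + iexp (- (2 * pi * x)) = 2 * of_real (cos (2 * pi * x))"
    by (simp add: cos_exp_eq flip: cos_of_real)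
  finally show ?thesis
    by (simp add: Q_char_def algebra_simps)
qed

lemma integral_prod_Pi_pmf:
  fixes f :: "'a \<Rightarrow> 'b \<Rightarrow> 'c::{real_normed_field, banach, second_countable_topology}"
  assumes "finite A" and "\<And>x. x \<in> A \<Longrightarrow> integrable (measure_pmf (p x)) (f x)"
  shows "(\<integral>y. (\<Prod>x\<in>A. f x (y x)) \<partial>Pi_pmf A dflt p) = (\<Prod>x\<in>A. \<integral>v. f x v \<partial>p x)"
proof -
  have component: "map_pmf (\<lambda>y. y x) (Pi_pmf A dflt p) = p x" if "x \<in> A" for x
    using Pi_pmf_component[OF assms(1), of x dflt p] that by simp
  have "prob_space.indep_vars (Pi_pmf A dflt p) (\<lambda>_. borel) (\<lambda>x y. f x (y x)) A"
    using prob_space.indep_vars_compose2[OF measure_pmf.prob_space_axioms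
        indep_vars_Pi_pmf[OF assms(1)], of f "\<lambda>_. borel"]
    by simp
  then have "(\<integral>y. (\<Prod>x\<in>A. f x (y x)) \<partial>Pi_pmf A dflt p)
      = (\<Prod>x\<in>A. \<integral>y. f x (y x) \<partial>Pi_pmf A dflt p)"
    using assms
    by (intro prob_space.indep_vars_lebesgue_integral measure_pmf.prob_space_axioms)
       (auto simp flip: component)
  also have "\<dots> = (\<Prod>x\<in>A. \<integral>v. f x v \<partial>p x)"
    by (intro prod.cong refl) (simp flip: component)
  finally show ?thesis .
qed

lemma integral_iexp_Q_dist:
  fixes u :: "nat \<Rightarrow> real"
  assumes "0 \<le> \<mu>" "\<mu> \<le> 1"
  shows "(\<integral>\<tau>. iexp (2 * pi * (\<Sum>i<m. u i * \<tau> i)) \<partial>Q_dist m \<mu>)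
    = of_real (\<Prod>i<m. Q_char \<mu> (u i))"
proof -
  have "iexp (2 * pi * (\<Sum>i<m. u i * \<tau> i)) = (\<Prod>i<m. iexp (2 * pi * u i * \<tau> i))" for \<tau>
    by (simp add: exp_sum[symmetric] sum_distrib_left mult_ac)
  then have "(\<integral>\<tau>. iexp (2 * pi * (\<Sum>i<m. u i * \<tau> i)) \<partial>Q_dist m \<mu>)
      = (\<integral>\<tau>. (\<Prod>i<m. iexp (2 * pi * u i * \<tau> i)) \<partial>Q_dist m \<mu>)"
    by simp
  also have "\<dots> = (\<Prod>i<m. \<integral>y. iexp (2 * pi * u i * y) \<partial>Q_coord \<mu>)"
    unfolding Q_dist_def
    by (rule integral_prod_Pi_pmf) (auto intro: integrable_measure_pmf_finite finite_set_pmf_Q_coord)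
  also have "\<dots> = of_real (\<Prod>i<m. Q_char \<mu> (u i))"
    by (simp only: integral_iexp_Q_coord[OF assms] of_real_prod)
  finally show ?thesis .
qed

lemma integral_iexp_normal_density:
  assumes "0 < \<sigma>"
  shows "(\<integral>x. iexp (a * x) \<partial>density lborel (normal_density 0 \<sigma>))
    = of_real (exp (- (a * \<sigma>)\<^sup>2 / 2))"
proof -
  interpret std_normal: prob_space std_normal_distribution
    by (rule prob_space_normal_density) simp
  have "distributed std_normal_distribution lborel (\<lambda>x. x) std_normal_density"
    unfolding distributed_def by (auto simp: distr_id2)
  then have "distributed std_normal_distribution lborel (\<lambda>x. 0 + \<sigma> * x)
      (normal_density (0 + \<sigma> * 0) (\<bar>\<sigma>\<bar> * 1))"
    by (rule std_normal.normal_density_affine) (use assms in auto)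
  then have scaled: "density lborel (normal_density 0 \<sigma>) = distr std_normal_distribution lborel (\<lambda>x. \<sigma> * x)"
    using assms unfolding distributed_def by simp
  have "(\<integral>x. iexp (a * x) \<partial>distr std_normal_distribution lborel (\<lambda>x. \<sigma> * x))
      = char std_normal_distribution (a * \<sigma>)"
    by (subst integral_distr) (auto simp: char_def mult_ac)
  then show ?thesis
    by (simp add: scaled char_std_normal_distribution)
qed

lemma prob_space_gauss_measure: "prob_space (gauss_measure l)"
  unfolding gauss_measure_def by (intro prob_space_PiM prob_space_normal_density) simp

lemma integrable_iexp_gauss_measure:
  "integrable (gauss_measure l) (\<lambda>\<theta>. iexp (2 * pi * (\<Sum>j<l. v j * \<theta> j)))"
  by (intro prob_space.integrable_iexp prob_space_gauss_measure) (auto simp: gauss_measure_def)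

lemma integral_iexp_gauss_measure:
  "(\<integral>\<theta>. iexp (2 * pi * (\<Sum>j<l. v j * \<theta> j)) \<partial>gauss_measure l)
    = of_real (exp (- pi * (\<Sum>j<l. (v j)\<^sup>2)))"
proof -
  define N where "N = density lborel (normal_density 0 (1 / sqrt (2 * pi)))"
  interpret N: prob_space N
    unfolding N_def by (rule prob_space_normal_density) simp
  interpret product_sigma_finite "\<lambda>_::nat. N"
    by unfold_locales
  have "iexp (2 * pi * (\<Sum>j<l. v j * \<theta> j)) = (\<Prod>j<l. iexp (2 * pi * v j * \<theta> j))" for \<theta>
    by (simp add: exp_sum[symmetric] sum_distrib_left mult_ac)
  then have "(\<integral>\<theta>. iexp (2 * pi * (\<Sum>j<l. v j * \<theta> j)) \<partial>gauss_measure l)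
      = (\<integral>\<theta>. (\<Prod>j<l. iexp (2 * pi * v j * \<theta> j)) \<partial>PiM {..<l} (\<lambda>_. N))"
    by (simp add: gauss_measure_def N_def)
  also have "\<dots> = (\<Prod>j<l. \<integral>x. iexp (2 * pi * v j * x) \<partial>N)"
    by (intro product_integral_prod N.integrable_iexp) (auto simp: N_def)
  also have "\<dots> = (\<Prod>j<l. of_real (exp (- pi * (v j)\<^sup>2)))"
    unfolding N_def by (intro prod.cong refl, subst integral_iexp_normal_density)
      (auto simp: power_mult_distrib power_divide power2_eq_square)
  also have "\<dots> = of_real (exp (- pi * (\<Sum>j<l. (v j)\<^sup>2)))"
    by (simp add: exp_sum sum_distrib_left flip: of_real_prod)
  finally show ?thesis .
qed

lemma
  fixes f :: "'a \<Rightarrow> 'b \<Rightarrow> 'c::{banach, second_countable_topology}"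
  assumes "finite (set_pmf p)" and "\<And>x. x \<in> set_pmf p \<Longrightarrow> integrable M (f x)"
  shows integrable_integral_pmf_finite: "integrable M (\<lambda>y. \<integral>x. f x y \<partial>p)"
    and integral_integral_pmf_finite_swap:
      "(\<integral>y. (\<integral>x. f x y \<partial>p) \<partial>M) = (\<integral>x. (\<integral>y. f x y \<partial>M) \<partial>p)"
proof -
  have inner: "(\<lambda>y. \<integral>x. f x y \<partial>p) = (\<lambda>y. \<Sum>x\<in>set_pmf p. pmf p x *\<^sub>R f x y)"
    using assms(1) by (intro ext integral_measure_pmf) auto
  show "integrable M (\<lambda>y. \<integral>x. f x y \<partial>p)"
    unfolding inner using assms(2) by auto
  show "(\<integral>y. (\<integral>x. f x y \<partial>p) \<partial>M) = (\<integral>x. (\<integral>y. f x y \<partial>M) \<partial>p)"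
  proof -
    have "(\<integral>y. (\<Sum>x\<in>set_pmf p. pmf p x *\<^sub>R f x y) \<partial>M)
        = (\<Sum>x\<in>set_pmf p. pmf p x *\<^sub>R (\<integral>y. f x y \<partial>M))"
      using assms(2) by (subst Bochner_Integration.integral_sum) auto
    also have "\<dots> = (\<integral>x. (\<integral>y. f x y \<partial>M) \<partial>p)"
      using assms(1) by (intro integral_measure_pmf[symmetric]) auto
    finally show ?thesis
      unfolding inner .
  qed
qed

lemma sum_mat_vec_mult_eq_transp_mat:
  "(\<Sum>i<m. mat_vec m l W \<theta> i * \<tau> i) = (\<Sum>j<l. mat_vec l m (transp_mat W) \<tau> j * \<theta> j)"
  unfolding mat_vec_def transp_mat_def sum_distrib_left sum_distrib_right
  by (subst sum.swap) (simp add: mult_ac)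

lemma
  assumes "0 \<le> \<mu>" "\<mu> \<le> 1"
  shows integrable_prod_Q_char_gauss_measure:
      "integrable (gauss_measure l) (\<lambda>\<theta>. \<Prod>i<m. Q_char \<mu> (mat_vec m l W \<theta> i))"
    and integral_prod_Q_char_gauss_measure:
      "(\<integral>\<theta>. (\<Prod>i<m. Q_char \<mu> (mat_vec m l W \<theta> i)) \<partial>gauss_measure l)
        = (\<integral>\<tau>. exp (- pi * (euclid_norm l (mat_vec l m (transp_mat W) \<tau>))\<^sup>2) \<partial>Q_dist m \<mu>)"
proof -
  define F where "F \<tau> \<theta> = iexp (2 * pi * (\<Sum>j<l. mat_vec l m (transp_mat W) \<tau> j * \<theta> j))" for \<tau> \<theta>
  have char: "of_real (\<Prod>i<m. Q_char \<mu> (mat_vec m l W \<theta> i)) = (\<integral>\<tau>. F \<tau> \<theta> \<partial>Q_dist m \<mu>)"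
    for \<theta>
    unfolding F_def sum_mat_vec_mult_eq_transp_mat[symmetric] by (rule integral_iexp_Q_dist[OF assms, symmetric])
  have F_integrable: "integrable (gauss_measure l) (F \<tau>)" for \<tau>
    unfolding F_def by (rule integrable_iexp_gauss_measure)
  have "integrable (gauss_measure l) (\<lambda>\<theta>. \<integral>\<tau>. F \<tau> \<theta> \<partial>Q_dist m \<mu>)"
    by (intro integrable_integral_pmf_finite finite_set_pmf_Q_dist F_integrable)
  then show "integrable (gauss_measure l) (\<lambda>\<theta>. \<Prod>i<m. Q_char \<mu> (mat_vec m l W \<theta> i))"
    by (simp flip: char complex_of_real_integrable_eq)
  have "of_real (\<integral>\<theta>. (\<Prod>i<m. Q_char \<mu> (mat_vec m l W \<theta> i)) \<partial>gauss_measure l)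
      = (\<integral>\<theta>. (\<integral>\<tau>. F \<tau> \<theta> \<partial>Q_dist m \<mu>) \<partial>gauss_measure l)"
    by (subst integral_complex_of_real[symmetric]) (simp only: char)
  also have "\<dots> = (\<integral>\<tau>. (\<integral>\<theta>. F \<tau> \<theta> \<partial>gauss_measure l) \<partial>Q_dist m \<mu>)"
    by (intro integral_integral_pmf_finite_swap finite_set_pmf_Q_dist F_integrable)
  also have "\<dots>
      = of_real (\<integral>\<tau>. exp (- pi * (euclid_norm l (mat_vec l m (transp_mat W) \<tau>))\<^sup>2) \<partial>Q_dist m \<mu>)"
    unfolding F_def integral_iexp_gauss_measure by (simp add: euclid_norm_def sum_nonneg)
  finally show "(\<integral>\<theta>. (\<Prod>i<m. Q_char \<mu> (mat_vec m l W \<theta> i)) \<partial>gauss_measure l)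
      = (\<integral>\<tau>. exp (- pi * (euclid_norm l (mat_vec l m (transp_mat W) \<tau>))\<^sup>2) \<partial>Q_dist m \<mu>)"
    by (simp only: of_real_eq_iff)
qed

lemma measure_S_set_mult_exp_le:
  assumes "0 < \<mu>" "\<mu> \<le> 1/4"
  shows "measure (gauss_measure l) (S_set d l W t) * exp (- 32 * \<mu> * t)
    \<le> (\<integral>\<theta>. (\<Prod>i<2*d. Q_char \<mu> (mat_vec (2*d) l W \<theta> i)) \<partial>gauss_measure l)"
proof -
  interpret prob_space "gauss_measure l"
    by (rule prob_space_gauss_measure)
  define P where "P \<theta> = (\<Prod>i<2*d. Q_char \<mu> (mat_vec (2*d) l W \<theta> i))" for \<theta>
  have P_integrable: "integrable (gauss_measure l) P"
    unfolding P_def using assms by (intro integrable_prod_Q_char_gauss_measure) auto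
  have "exp (- 32 * \<mu> * t) \<le> P \<theta>" if "\<theta> \<in> S_set d l W t" for \<theta>
  proof -
    have "torus_norm (2*d) (mat_vec (2*d) l W \<theta>) \<le> sqrt t"
      using that by (simp add: S_set_def)
    then have "(torus_norm (2*d) (mat_vec (2*d) l W \<theta>))\<^sup>2 \<le> t"
      using torus_norm_nonneg by (intro sqrt_ge_absD) simp
    then have "exp (- 32 * \<mu> * t) \<le> exp (- 32 * \<mu> * (torus_norm (2*d) (mat_vec (2*d) l W \<theta>))\<^sup>2)"
      using assms by simp
    also have "\<dots> \<le> P \<theta>"
      unfolding P_def using assms by (rule prod_Q_char_ge_exp_torus_norm)
    finally show ?thesis .
  qed
  then have "S_set d l W t \<subseteq> {\<theta> \<in> space (gauss_measure l). P \<theta> \<ge> exp (- 32 * \<mu> * t)}"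
    by (auto simp: S_set_def)
  then have "measure (gauss_measure l) (S_set d l W t)
      \<le> measure (gauss_measure l) {\<theta> \<in> space (gauss_measure l). P \<theta> \<ge> exp (- 32 * \<mu> * t)}"
    using P_integrable by (intro finite_measure_mono) auto
  also have "\<dots> \<le> (\<integral>\<theta>. P \<theta> \<partial>gauss_measure l) / exp (- 32 * \<mu> * t)"
    using P_integrable assms unfolding P_def
    by (intro integral_Markov_inequality_measure[where A = "space (gauss_measure l)"] AE_I2 prod_nonneg)
       (auto intro: less_imp_le[OF Q_char_pos])
  finally show ?thesis
    by (simp add: P_def divide_simps)
qed

lemma integral_exp_neg_pi_sq_le:
  fixes f :: "'a \<Rightarrow> real" and p :: "'a pmf"
  assumes "0 \<le> r"
  shows "(\<integral>x. exp (- pi * (f x)\<^sup>2) \<partial>p) \<le> measure_pmf.prob p {x. f x \<le> r} + exp (- r\<^sup>2)"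
proof -
  have "(\<integral>x. exp (- pi * (f x)\<^sup>2) \<partial>p)
      \<le> (\<integral>x. indicator {x. f x \<le> r} x + exp (- r\<^sup>2) \<partial>p)"
  proof (rule integral_mono)
    show "integrable p (\<lambda>x. exp (- pi * (f x)\<^sup>2))"
      by (rule measure_pmf.integrable_const_bound[where B = 1]) auto
    show "integrable p (\<lambda>x. indicator {x. f x \<le> r} x + exp (- r\<^sup>2))"
      by (intro Bochner_Integration.integrable_add measure_pmf.integrable_const_bound[where B = 1]) auto
  next
    fix x
    show "exp (- pi * (f x)\<^sup>2) \<le> indicator {x. f x \<le> r} x + exp (- r\<^sup>2)"
    proof (cases "f x \<le> r")
      case False
      then have "r\<^sup>2 \<le> (f x)\<^sup>2"
        using assms by (intro power_mono) auto
      also have "\<dots> \<le> pi * (f x)\<^sup>2"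
        using mult_right_mono[of 1 pi "(f x)\<^sup>2"] pi_ge_two by simp
      finally show ?thesis
        using False by simp
    next
      case True
      have "exp (- pi * (f x)\<^sup>2) \<le> 1"
        by simp
      then show ?thesis
        using True by (simp add: add_increasing2)
    qed
  qed
  also have "\<dots> = measure_pmf.prob p {x. f x \<le> r} + exp (- r\<^sup>2)"
    by (subst Bochner_Integration.integral_add) (auto intro: measure_pmf.integrable_const_bound[where B = 1])
  finally show ?thesis .
qed

theorem lemma3p2:
  fixes \<beta> \<mu> t :: real and d l :: nat and W :: "nat \<Rightarrow> nat \<Rightarrow> real"
  assumes "\<beta> > 0" and "0 < \<mu>" and "\<mu> \<le> 1/4" and "t \<ge> 0"
  shows "measure (gauss_measure l) (S_set d l W t) * exp (- 32 * \<mu> * t)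
    \<le> measure_pmf.prob (Q_dist (2*d) \<mu>)
         {\<tau>. euclid_norm l (mat_vec l (2*d) (transp_mat W) \<tau>) \<le> \<beta> * sqrt (real l)}
       + exp (- (\<beta>\<^sup>2) * real l)"
proof -
  have "measure (gauss_measure l) (S_set d l W t) * exp (- 32 * \<mu> * t)
      \<le> (\<integral>\<theta>. (\<Prod>i<2*d. Q_char \<mu> (mat_vec (2*d) l W \<theta> i)) \<partial>gauss_measure l)"
    using assms by (intro measure_S_set_mult_exp_le)
  also have "\<dots>
      = (\<integral>\<tau>. exp (- pi * (euclid_norm l (mat_vec l (2*d) (transp_mat W) \<tau>))\<^sup>2) \<partial>Q_dist (2*d) \<mu>)"
    using assms by (intro integral_prod_Q_char_gauss_measure) auto
  also have "\<dots> \<le> measure_pmf.prob (Q_dist (2*d) \<mu>)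
         {\<tau>. euclid_norm l (mat_vec l (2*d) (transp_mat W) \<tau>) \<le> \<beta> * sqrt (real l)}
       + exp (- (\<beta> * sqrt (real l))\<^sup>2)"
    using assms by (intro integral_exp_neg_pi_sq_le) simp
  finally show ?thesis
    by (simp add: power_mult_distrib)
qed

end
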